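(* For any sequence of positive integers $A=A(n)\to\infty$ with $A(n)=o(n)$, as $n\to\infty$, \[ \Pr[BINGO(A,A;n,n)]\sim\Bigl(\frac{2\alpha-1}{\pi}\Bigr)^{1/2}A^{(2\alpha-1)/2}n^{-\alpha}. \]
   Context: Fix $\alpha>1$. Consider the Markov chain on $\mathbb N\times\mathbb N$ which from state $(i,j)$ moves to $(i+1,j)$ with probability $i^\alpha/(i^\alpha+j^\alpha)$ and to $(i,j+1)$ with probability $j^\alpha/(i^\alpha+j^\alpha)$. For $a\le c$, $b\le d$, $BINGO(a,b;c,d)$ denotes the event that this chain, started at state $(a,b)$, visits the state $(c,d)$. *)

theory Defs
  imports "HOL-Probability.Probability" "HOL-Library.Landau_Symbols"
begin

definition bingo_step :: "real \<Rightarrow> nat \<times> nat \<Rightarrow> (nat \<times> nat) pmf" where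
  "bingo_step \<alpha> s = (case s of (i, j) \<Rightarrow>
     map_pmf (\<lambda>b. if b then (i + 1, j) else (i, j + 1))
       (bernoulli_pmf (real i powr \<alpha> / (real i powr \<alpha> + real j powr \<alpha>))))"

text \<open>Distribution of the trajectory (X_0, ..., X_N) of the chain started at s,
  as the list [X_N, ..., X_1, X_0].\<close>
fun bingo_traj :: "real \<Rightarrow> nat \<times> nat \<Rightarrow> nat \<Rightarrow> (nat \<times> nat) list pmf" where
  "bingo_traj \<alpha> s 0 = return_pmf [s]"
| "bingo_traj \<alpha> s (Suc N) =
     bind_pmf (bingo_traj \<alpha> s N) (\<lambda>xs. map_pmf (\<lambda>t. t # xs) (bingo_step \<alpha> (hd xs)))"

text \<open>Each step increases the coordinate sum by one, so the chain can only visit (c,d)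
  within its first c+d steps; hence it suffices to look at the trajectory up to time c+d.\<close>
definition bingo_prob :: "real \<Rightarrow> nat \<Rightarrow> nat \<Rightarrow> nat \<Rightarrow> nat \<Rightarrow> real" where
  "bingo_prob \<alpha> a b c d =
     measure_pmf.prob (bingo_traj \<alpha> (a, b) (c + d)) {xs. (c, d) \<in> set xs}"

end

theory Submission
  imports Defs
begin

text \<open>
  Give the chain independent exponential clocks of rates k^alpha, one pair per level k
  (Rubin's construction). Pr[BINGO(a,b;n,n)] is then governed by the difference of the times
  the two coordinates need to climb to n; its characteristic function is
  race_charfun alpha n a b, a product of Cauchy factors. Rather than building the embedding,
  we check directly that (a,b) |-> (pi n^alpha)^-1 * integral of Re race_charfun satisfies the
  first-step recursion of the hitting probability, vanishes once a coordinate exceeds n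
  (partial fractions: the residues of a product of at least two Cauchy factors sum to zero)
  and equals 1 at (n,n).

  On the diagonal a = b = A the integrand is prod_{k=A..n} (1 + t^2/k^(2 alpha))^-1.
  After the substitution t = A^((2 alpha - 1)/2) u it tends to exp (-u^2/(2 alpha - 1)),
  because A^(2 alpha - 1) * sum_{k=A..n} k^(-2 alpha) tends to 1/(2 alpha - 1) when A = o(n),
  and it is dominated by (1 + 2^(-2 alpha) u^2)^-1; dominated convergence gives the
  Gaussian integral sqrt (pi (2 alpha - 1)).
\<close>

section \<open>First-step analysis of the chain\<close>

lemma measure_bind_pmf:
  "measure_pmf.prob (bind_pmf M f) E = measure_pmf.expectation M (\<lambda>x. measure_pmf.prob (f x) E)"
proof -
  have "ennreal (measure_pmf.prob (bind_pmf M f) E) = (\<integral>\<^sup>+x. ennreal (measure_pmf.prob (f x) E) \<partial>M)"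
    by (simp add: measure_pmf.emeasure_eq_measure[symmetric])
  also have "\<dots> = ennreal (measure_pmf.expectation M (\<lambda>x. measure_pmf.prob (f x) E))"
    by (intro nn_integral_eq_integral measure_pmf.integrable_const_bound[where B = 1]) auto
  finally show ?thesis by (simp add: integral_nonneg_AE)
qed

lemma bingo_traj_nonempty: "xs \<in> set_pmf (bingo_traj \<alpha> s N) \<Longrightarrow> xs \<noteq> []"
  by (cases N) auto

lemma bingo_traj_Suc_first_step:
  "bingo_traj \<alpha> s (Suc N) = bind_pmf (bingo_step \<alpha> s) (\<lambda>t. map_pmf (\<lambda>xs. xs @ [s]) (bingo_traj \<alpha> t N))"
proof (induction N)
  case 0
  show ?case by (simp add: bind_return_pmf map_pmf_def)
next
  case (Suc N)
  have "bingo_traj \<alpha> s (Suc (Suc N)) = bind_pmf (bingo_step \<alpha> s) (\<lambda>t. bind_pmf (bingo_traj \<alpha> t N)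
       (\<lambda>xs. map_pmf (\<lambda>u. u # (xs @ [s])) (bingo_step \<alpha> (hd (xs @ [s])))))"
    unfolding bingo_traj.simps(2)[of _ _ "Suc N"] by (simp only: Suc bind_assoc_pmf bind_map_pmf)
  also have "\<dots> = bind_pmf (bingo_step \<alpha> s) (\<lambda>t. bind_pmf (bingo_traj \<alpha> t N)
       (\<lambda>xs. map_pmf (\<lambda>ys. ys @ [s]) (map_pmf (\<lambda>u. u # xs) (bingo_step \<alpha> (hd xs)))))"
    by (intro bind_pmf_cong refl) (auto simp: map_pmf_comp dest: bingo_traj_nonempty)
  also have "\<dots> = bind_pmf (bingo_step \<alpha> s) (\<lambda>t. map_pmf (\<lambda>xs. xs @ [s]) (bingo_traj \<alpha> t (Suc N)))"
    by (simp only: map_bind_pmf bingo_traj.simps)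
  finally show ?case .
qed

definition hit_prob :: "real \<Rightarrow> nat \<times> nat \<Rightarrow> nat \<times> nat \<Rightarrow> nat \<Rightarrow> real" where
  "hit_prob \<alpha> tgt s N = measure_pmf.prob (bingo_traj \<alpha> s N) {xs. tgt \<in> set xs}"

definition step_prob :: "real \<Rightarrow> nat \<Rightarrow> nat \<Rightarrow> real" where
  "step_prob \<alpha> i j = real i powr \<alpha> / (real i powr \<alpha> + real j powr \<alpha>)"

lemma step_prob_nonneg: "0 \<le> step_prob \<alpha> i j"
  by (simp add: step_prob_def)

lemma step_prob_le_1: "step_prob \<alpha> i j \<le> 1"
  unfolding step_prob_def
  by (cases "real i powr \<alpha> + real j powr \<alpha> = 0") (simp_all add: divide_le_eq_1 less_le)

lemma hit_prob_0: "hit_prob \<alpha> tgt s 0 = (if s = tgt then 1 else 0)"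
  by (simp add: hit_prob_def)

lemma hit_prob_Suc:
  "hit_prob \<alpha> tgt (i, j) (Suc N) = (if (i, j) = tgt then 1 else
     step_prob \<alpha> i j * hit_prob \<alpha> tgt (i + 1, j) N + (1 - step_prob \<alpha> i j) * hit_prob \<alpha> tgt (i, j + 1) N)"
  using step_prob_nonneg[of \<alpha> i j] step_prob_le_1[of \<alpha> i j]
  unfolding hit_prob_def bingo_traj_Suc_first_step bingo_step_def step_prob_def
  by (cases "(i, j) = tgt") (simp_all add: bind_map_pmf measure_bind_pmf)

lemma hit_prob_same_target: "hit_prob \<alpha> s s N = 1"
  by (cases s; cases N) (simp_all add: hit_prob_0 hit_prob_Suc)

lemma hit_prob_eq_0_if_past_target: "c < i \<or> d < j \<Longrightarrow> hit_prob \<alpha> (c, d) (i, j) N = 0"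
proof (induction N arbitrary: i j)
  case (Suc N)
  then show ?case by (auto simp: hit_prob_Suc)
qed (auto simp: hit_prob_0)

lemma hit_prob_Suc_eq:
  "c + d \<le> i + j + N \<Longrightarrow> hit_prob \<alpha> (c, d) (i, j) (Suc N) = hit_prob \<alpha> (c, d) (i, j) N"
proof (induction N arbitrary: i j)
  case 0
  then show ?case by (auto simp: hit_prob_Suc hit_prob_0)
next
  case (Suc N)
  then show ?case by (subst (1 2) hit_prob_Suc) simp
qed

lemma bingo_prob_conv_hit_prob: "bingo_prob \<alpha> a b c d = hit_prob \<alpha> (c, d) (a, b) (c + d)"
  by (simp add: bingo_prob_def hit_prob_def)

lemma bingo_prob_target: "bingo_prob \<alpha> c d c d = 1"
  by (simp add: bingo_prob_conv_hit_prob hit_prob_same_target)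

lemma bingo_prob_eq_0_if_past_target: "c < a \<or> d < b \<Longrightarrow> bingo_prob \<alpha> a b c d = 0"
  by (simp add: bingo_prob_conv_hit_prob hit_prob_eq_0_if_past_target)

lemma bingo_prob_first_step:
  assumes "(a, b) \<noteq> (c, d)"
  shows "bingo_prob \<alpha> a b c d =
    step_prob \<alpha> a b * bingo_prob \<alpha> (a + 1) b c d + (1 - step_prob \<alpha> a b) * bingo_prob \<alpha> a (b + 1) c d"
proof (cases "c + d")
  case 0
  then show ?thesis using assms by (simp add: bingo_prob_eq_0_if_past_target)
next
  case (Suc N)
  have children: "hit_prob \<alpha> (c, d) (a + 1, b) N = bingo_prob \<alpha> (a + 1) b c d"
      "hit_prob \<alpha> (c, d) (a, b + 1) N = bingo_prob \<alpha> a (b + 1) c d"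
    by (simp_all add: bingo_prob_conv_hit_prob Suc hit_prob_Suc_eq)
  have "bingo_prob \<alpha> a b c d = hit_prob \<alpha> (c, d) (a, b) (Suc N)"
    by (simp add: bingo_prob_conv_hit_prob Suc)
  also have "\<dots> = step_prob \<alpha> a b * hit_prob \<alpha> (c, d) (a + 1, b) N
      + (1 - step_prob \<alpha> a b) * hit_prob \<alpha> (c, d) (a, b + 1) N"
    using assms by (auto simp: hit_prob_Suc)
  finally show ?thesis
    unfolding children .
qed

section \<open>Cauchy kernels and partial fractions\<close>

lemma has_bochner_integral_Cauchy_kernel:
  fixes w :: real
  assumes "0 < w"
  shows "has_bochner_integral lborel (\<lambda>t. w / (w\<^sup>2 + t\<^sup>2)) pi"
proof -
  have deriv: "DERIV arctan x :> 1 / (1 + x\<^sup>2)" for x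
    by (rule DERIV_arctan[THEN DERIV_cong]) (simp add: divide_inverse)
  have cont: "isCont (\<lambda>t::real. 1 / (1 + t\<^sup>2)) x" for x
    by (intro continuous_intros) (smt (verit) zero_le_power2)
  have "((arctan \<circ> real_of_ereal) \<longlongrightarrow> - (pi / 2)) (at_right (- \<infinity>))"
    by (simp add: tendsto_arctan_at_bot ereal_tendsto_simps)
  moreover have "((arctan \<circ> real_of_ereal) \<longlongrightarrow> pi / 2) (at_left \<infinity>)"
    by (simp add: tendsto_arctan_at_top ereal_tendsto_simps)
  ultimately have "set_integrable lborel (einterval (- \<infinity>) \<infinity>) (\<lambda>t::real. 1 / (1 + t\<^sup>2))"
      "(LBINT t=- \<infinity>..\<infinity>. 1 / (1 + t\<^sup>2)) = pi"
    using interval_integral_FTC_nonneg[of "- \<infinity>" \<infinity> arctan "\<lambda>t. 1 / (1 + t\<^sup>2)", OF _ deriv cont]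
    by simp_all
  then have unit: "has_bochner_integral lborel (\<lambda>t::real. 1 / (1 + t\<^sup>2)) pi"
    by (simp add: has_bochner_integral_iff set_integrable_def interval_lebesgue_integral_def
        set_lebesgue_integral_def)
  have "w\<^sup>2 + (0 + w * t)\<^sup>2 = w\<^sup>2 * (1 + t\<^sup>2)" for t
    by (simp add: algebra_simps power2_eq_square)
  then have "(\<lambda>t. 1 / w * (1 / (1 + t\<^sup>2))) = (\<lambda>t. w / (w\<^sup>2 + (0 + w * t)\<^sup>2))"
    using assms by (simp add: power2_eq_square)
  then have "has_bochner_integral lborel (\<lambda>t. w / (w\<^sup>2 + (0 + w * t)\<^sup>2)) (pi /\<^sub>R \<bar>w\<bar>)"
    using has_bochner_integral_mult_right[OF unit, of "1 / w"] assms by (simp add: divide_inverse mult.commute)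
  then show ?thesis
    using lborel_has_bochner_integral_real_affine_iff[of w "\<lambda>t. w / (w\<^sup>2 + t\<^sup>2)" pi 0] assms
    by simp
qed

lemma partial_fraction_times_pole:
  fixes w :: "'a \<Rightarrow> real" and z :: complex
  assumes "\<forall>k\<in>K. of_real (w k) + z \<noteq> 0" "of_real (w j) + z \<noteq> 0" "\<forall>k\<in>K. w k \<noteq> w j"
  shows "(\<Sum>k\<in>K. of_real (c k) / (of_real (w k) + z)) * (1 / (of_real (w j) + z))
    = (\<Sum>k\<in>K. of_real (c k / (w j - w k)) / (of_real (w k) + z))
      - of_real (\<Sum>k\<in>K. c k / (w j - w k)) / (of_real (w j) + z)"
proof -
  have pole_pair: "e / x * (1 / y) = e / (y - x) * (1 / x - 1 / y)"
    if "x \<noteq> 0" "y \<noteq> 0" "y - x \<noteq> 0" for e x y :: complex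
    using that by (simp add: field_simps)
  have split: "of_real (c k) / (of_real (w k) + z) * (1 / (of_real (w j) + z))
      = of_real (c k / (w j - w k)) / (of_real (w k) + z) - of_real (c k / (w j - w k)) / (of_real (w j) + z)"
    if "k \<in> K" for k
  proof -
    have "of_real (c k / (w j - w k)) = of_real (c k) / ((of_real (w j) + z) - (of_real (w k) + z))"
      by simp
    moreover have "w j \<noteq> w k"
      using assms(3) that by auto
    ultimately show ?thesis
      using pole_pair[of "of_real (w k) + z" "of_real (w j) + z"] assms(1,2) that by (simp add: right_diff_distrib)
  qed
  have "(\<Sum>k\<in>K. of_real (c k) / (of_real (w k) + z)) * (1 / (of_real (w j) + z))
      = (\<Sum>k\<in>K. of_real (c k / (w j - w k)) / (of_real (w k) + z) - of_real (c k / (w j - w k)) / (of_real (w j) + z))"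
    unfolding sum_distrib_right by (rule sum.cong[OF refl split])
  then show ?thesis
    by (simp only: sum_subtractf sum_divide_distrib of_real_sum)
qed

lemma partial_fractions_prod_inverse:
  fixes w :: "'a \<Rightarrow> real"
  assumes "finite K" "K \<noteq> {}" "inj_on w K"
  shows "\<exists>c. (\<forall>z. (\<forall>k\<in>K. of_real (w k) + z \<noteq> 0) \<longrightarrow>
              (\<Prod>k\<in>K. 1 / (of_real (w k) + z)) = (\<Sum>k\<in>K. of_real (c k) / (of_real (w k) + z :: complex)))
           \<and> (2 \<le> card K \<longrightarrow> sum c K = 0)"
  using assms
proof (induction K rule: finite_ne_induct)
  case (singleton k)
  show ?case by (intro exI[of _ "\<lambda>_. 1"]) auto
next
  case (insert j K)
  then obtain c where c: "\<And>z. \<forall>k\<in>K. of_real (w k) + z \<noteq> 0 \<Longrightarrow>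
      (\<Prod>k\<in>K. 1 / (of_real (w k) + z)) = (\<Sum>k\<in>K. of_real (c k) / (of_real (w k) + z :: complex))"
    by (auto simp: inj_on_insert)
  define d where "d k = c k / (w j - w k)" for k
  define c' where "c' k = (if k = j then - sum d K else d k)" for k
  have c'_K: "c' k = d k" if "k \<in> K" for k
    using insert.hyps that by (auto simp: c'_def)
  have "(\<Prod>k\<in>insert j K. 1 / (of_real (w k) + z)) = (\<Sum>k\<in>insert j K. of_real (c' k) / (of_real (w k) + z))"
    if nz: "\<forall>k\<in>insert j K. of_real (w k) + z \<noteq> 0" for z :: complex
  proof -
    have "(\<Prod>k\<in>insert j K. 1 / (of_real (w k) + z))
        = (\<Sum>k\<in>K. of_real (c k) / (of_real (w k) + z)) * (1 / (of_real (w j) + z))"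
      using insert.hyps nz c by (simp add: mult.commute)
    also have "\<dots> = (\<Sum>k\<in>K. of_real (d k) / (of_real (w k) + z)) - of_real (sum d K) / (of_real (w j) + z)"
      unfolding d_def using insert nz by (intro partial_fraction_times_pole) (auto simp: inj_on_def)
    also have "\<dots> = (\<Sum>k\<in>insert j K. of_real (c' k) / (of_real (w k) + z))"
    proof -
      have "(\<Sum>k\<in>K. of_real (c' k) / (of_real (w k) + z)) = (\<Sum>k\<in>K. of_real (d k) / (of_real (w k) + z))"
        by (intro sum.cong refl) (simp add: c'_K)
      then show ?thesis
        using insert.hyps by (simp add: c'_def)
    qed
    finally show ?thesis .
  qed
  moreover have "sum c' (insert j K) = 0"
    using insert.hyps sum.cong[OF refl c'_K] by (simp add: c'_def)
  ultimately show ?case by blast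
qed

lemma Cauchy_factor_nonzero: "0 < w \<Longrightarrow> of_real w + \<i> * of_real t \<noteq> (0 :: complex)"
  by (auto dest: arg_cong[where f = Re])

lemma Re_divide_Cauchy_factor:
  "0 < w \<Longrightarrow> Re (of_real c / (of_real w + \<i> * of_real t)) = c * (w / (w\<^sup>2 + t\<^sup>2))"
  by (simp add: Re_divide power2_eq_square)

lemma has_bochner_integral_Re_prod_Cauchy_factors:
  fixes w :: "'a \<Rightarrow> real"
  assumes "finite K" "2 \<le> card K" "inj_on w K" "\<forall>k\<in>K. 0 < w k"
  shows "has_bochner_integral lborel (\<lambda>t. Re (\<Prod>k\<in>K. of_real (w k) / (of_real (w k) + \<i> * of_real t))) 0"
proof -
  obtain c where c: "\<And>z. \<forall>k\<in>K. of_real (w k) + z \<noteq> 0 \<Longrightarrow>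
      (\<Prod>k\<in>K. 1 / (of_real (w k) + z)) = (\<Sum>k\<in>K. of_real (c k) / (of_real (w k) + z :: complex))"
    and c0: "sum c K = 0"
    using partial_fractions_prod_inverse[OF assms(1) _ assms(3)] assms(2) by fastforce
  define P where "P = prod w K"
  have Re_prod: "Re (\<Prod>k\<in>K. of_real (w k) / (of_real (w k) + \<i> * of_real t))
      = (\<Sum>k\<in>K. P * c k * (w k / ((w k)\<^sup>2 + t\<^sup>2)))" for t
  proof -
    have nz: "\<forall>k\<in>K. of_real (w k) + \<i> * of_real t \<noteq> 0"
      using assms(4) Cauchy_factor_nonzero by blast
    have "(\<Prod>k\<in>K. of_real (w k) / (of_real (w k) + \<i> * of_real t))
        = of_real P * (\<Prod>k\<in>K. 1 / (of_real (w k) + \<i> * of_real t))"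
      by (simp add: P_def prod_dividef)
    also have "\<dots> = (\<Sum>k\<in>K. of_real (P * c k) / (of_real (w k) + \<i> * of_real t))"
      by (simp add: c[OF nz] sum_distrib_left)
    finally have "Re (\<Prod>k\<in>K. of_real (w k) / (of_real (w k) + \<i> * of_real t))
        = (\<Sum>k\<in>K. Re (of_real (P * c k) / (of_real (w k) + \<i> * of_real t)))"
      by (simp only: Re_sum)
    also have "\<dots> = (\<Sum>k\<in>K. P * c k * (w k / ((w k)\<^sup>2 + t\<^sup>2)))"
      using assms(4) by (intro sum.cong refl Re_divide_Cauchy_factor) auto
    finally show ?thesis .
  qed
  have "has_bochner_integral lborel (\<lambda>t. \<Sum>k\<in>K. P * c k * (w k / ((w k)\<^sup>2 + t\<^sup>2))) (\<Sum>k\<in>K. P * c k * pi)"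
    using assms(4)
    by (intro has_bochner_integral_sum has_bochner_integral_mult_right has_bochner_integral_Cauchy_kernel) auto
  moreover have "(\<Sum>k\<in>K. P * c k * pi) = 0"
    using c0 by (simp flip: sum_distrib_left sum_distrib_right)
  ultimately show ?thesis
    unfolding Re_prod by simp
qed

lemma Re_prod_conj_Cauchy_factors:
  "Re (\<Prod>k\<in>K. of_real (w k) / (of_real (w k) - \<i> * of_real t))
    = Re (\<Prod>k\<in>K. of_real (w k) / (of_real (w k) + \<i> * of_real t))"
proof -
  have "(\<Prod>k\<in>K. of_real (w k) / (of_real (w k) - \<i> * of_real t))
      = cnj (\<Prod>k\<in>K. of_real (w k) / (of_real (w k) + \<i> * of_real t))"
    by simp
  then show ?thesis
    by (simp only: cnj.sel(1))
qed

lemma norm_Cauchy_factor_le_1: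
  assumes "0 < w"
  shows "norm (of_real w / (of_real w + \<i> * of_real t)) \<le> 1"
proof -
  have "norm (of_real w + \<i> * of_real t) = sqrt (w\<^sup>2 + t\<^sup>2)"
    by (simp add: cmod_def)
  moreover have "w \<le> sqrt (w\<^sup>2 + t\<^sup>2)"
    using assms real_sqrt_le_mono[of "w\<^sup>2" "w\<^sup>2 + t\<^sup>2"] by simp
  moreover have "0 < w\<^sup>2 + t\<^sup>2"
    using assms by (simp add: add_pos_nonneg)
  ultimately show ?thesis
    using assms by (simp add: norm_divide divide_le_eq_1)
qed

lemma Cauchy_factor_times_conj:
  assumes "0 < w"
  shows "of_real w / (of_real w - \<i> * of_real t) * (of_real w / (of_real w + \<i> * of_real t))
    = complex_of_real (w\<^sup>2 / (w\<^sup>2 + t\<^sup>2))"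
proof -
  have "(of_real w - \<i> * of_real t) * (of_real w + \<i> * of_real t) = complex_of_real (w\<^sup>2 + t\<^sup>2)"
    by (simp add: algebra_simps power2_eq_square)
  then show ?thesis
    by (simp add: power2_eq_square)
qed

section \<open>Fourier representation of the hitting probability\<close>

definition clock_rate :: "real \<Rightarrow> nat \<Rightarrow> real" where
  "clock_rate \<alpha> k = real k powr \<alpha>"

lemma clock_rate_pos: "1 \<le> k \<Longrightarrow> 0 < clock_rate \<alpha> k"
  by (simp add: clock_rate_def)

lemma inj_on_clock_rate: "0 < \<alpha> \<Longrightarrow> inj_on (clock_rate \<alpha>) {1..}"
  by (rule strict_mono_on_imp_inj_on)
    (auto simp: clock_rate_def strict_mono_on_def intro: powr_less_mono2)

definition race_charfun :: "real \<Rightarrow> nat \<Rightarrow> nat \<Rightarrow> nat \<Rightarrow> real \<Rightarrow> complex" where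
  "race_charfun \<alpha> n a b t =
     (\<Prod>k\<in>{a..n}. of_real (clock_rate \<alpha> k) / (of_real (clock_rate \<alpha> k) - \<i> * of_real t)) *
     (\<Prod>k\<in>{b..n}. of_real (clock_rate \<alpha> k) / (of_real (clock_rate \<alpha> k) + \<i> * of_real t))"

definition race_integral :: "real \<Rightarrow> nat \<Rightarrow> nat \<Rightarrow> nat \<Rightarrow> real" where
  "race_integral \<alpha> n a b = (\<integral>t. Re (race_charfun \<alpha> n a b t) \<partial>lborel)"

lemma race_charfun_step:
  assumes "1 \<le> a" "a \<le> n" "1 \<le> b" "b \<le> n"
  shows "race_charfun \<alpha> n a b t = of_real (step_prob \<alpha> a b) * race_charfun \<alpha> n (a + 1) b t
    + of_real (1 - step_prob \<alpha> a b) * race_charfun \<alpha> n a (b + 1) t"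
proof -
  define x :: complex where "x = of_real (clock_rate \<alpha> a)"
  define y :: complex where "y = of_real (clock_rate \<alpha> b)"
  define z :: complex where "z = \<i> * of_real t"
  have pos: "0 < clock_rate \<alpha> a" "0 < clock_rate \<alpha> b"
    using assms clock_rate_pos by auto
  then have nz: "x - z \<noteq> 0" "y + z \<noteq> 0" "x \<noteq> 0" "y \<noteq> 0" "x + y \<noteq> 0"
    unfolding x_def y_def z_def
    using Cauchy_factor_nonzero[of "clock_rate \<alpha> a" "- t"] Cauchy_factor_nonzero[of "clock_rate \<alpha> b" t]
    by (auto simp flip: of_real_add)
  have first: "race_charfun \<alpha> n a b t = x / (x - z) * race_charfun \<alpha> n (a + 1) b t"
    unfolding race_charfun_def x_def z_def using assms
    by (simp add: atLeastAtMost_insertL[symmetric] mult.assoc)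
  have second: "race_charfun \<alpha> n a b t = y / (y + z) * race_charfun \<alpha> n a (b + 1) t"
    unfolding race_charfun_def y_def z_def using assms
    by (simp add: atLeastAtMost_insertL[symmetric] mult_ac)
  have "of_real (step_prob \<alpha> a b) = x / (x + y)" "of_real (1 - step_prob \<alpha> a b) = y / (x + y)"
    using nz unfolding step_prob_def x_def y_def clock_rate_def by (simp_all add: field_simps)
  moreover have "race_charfun \<alpha> n (a + 1) b t = race_charfun \<alpha> n a b t * (x - z) / x"
    using first nz(1,3) by (simp add: field_simps)
  moreover have "race_charfun \<alpha> n a (b + 1) t = race_charfun \<alpha> n a b t * (y + z) / y"
    using second nz(2,4) by (simp add: field_simps)
  moreover have "h = x / (x + y) * (h * (x - z) / x) + y / (x + y) * (h * (y + z) / y)" for h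
    using nz(3-5) by (simp add: divide_simps) (simp add: algebra_simps)
  ultimately show ?thesis
    by simp
qed

lemma norm_race_charfun_le:
  assumes "1 \<le> a" "a \<le> n" "1 \<le> b" "b \<le> n"
  shows "norm (race_charfun \<alpha> n a b t) \<le> (clock_rate \<alpha> n)\<^sup>2 / ((clock_rate \<alpha> n)\<^sup>2 + t\<^sup>2)"
proof -
  define F where "F k = of_real (clock_rate \<alpha> k) / (of_real (clock_rate \<alpha> k) - \<i> * of_real t)" for k
  define G where "G k = of_real (clock_rate \<alpha> k) / (of_real (clock_rate \<alpha> k) + \<i> * of_real t)" for k
  have rate: "0 < clock_rate \<alpha> k" if "a \<le> k \<or> b \<le> k" for k
    using assms that clock_rate_pos by auto
  have "{a..n} = insert n {a..<n}" "{b..n} = insert n {b..<n}"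
    using assms by auto
  then have "race_charfun \<alpha> n a b t = (F n * G n) * (prod F {a..<n} * prod G {b..<n})"
    unfolding race_charfun_def F_def[symmetric] G_def[symmetric] by (simp add: mult_ac)
  also have "F n * G n = of_real ((clock_rate \<alpha> n)\<^sup>2 / ((clock_rate \<alpha> n)\<^sup>2 + t\<^sup>2))"
    unfolding F_def G_def using assms rate by (intro Cauchy_factor_times_conj) auto
  finally have "norm (race_charfun \<alpha> n a b t)
      = \<bar>(clock_rate \<alpha> n)\<^sup>2 / ((clock_rate \<alpha> n)\<^sup>2 + t\<^sup>2)\<bar> * norm (prod F {a..<n} * prod G {b..<n})"
    by (simp only: norm_mult norm_of_real)
  moreover have "norm (prod F {a..<n} * prod G {b..<n}) \<le> 1"
  proof -
    have "norm (F k) \<le> 1" if "a \<le> k" for k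
      using norm_Cauchy_factor_le_1[of "clock_rate \<alpha> k" "- t"] rate that by (simp add: F_def)
    moreover have "norm (G k) \<le> 1" if "b \<le> k" for k
      using norm_Cauchy_factor_le_1[of "clock_rate \<alpha> k" t] rate that by (simp add: G_def)
    ultimately have "norm (prod F {a..<n}) \<le> 1" "norm (prod G {b..<n}) \<le> 1"
      by (auto simp: prod_norm[symmetric] intro!: prod_le_1)
    then show ?thesis
      by (simp add: norm_mult mult_le_one)
  qed
  moreover have "0 \<le> (clock_rate \<alpha> n)\<^sup>2 / ((clock_rate \<alpha> n)\<^sup>2 + t\<^sup>2)"
    by simp
  ultimately show ?thesis
    using mult_left_le[of "norm (prod F {a..<n} * prod G {b..<n})"] by (simp only: abs_of_nonneg)
qed

lemma race_charfun_integrable: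
  assumes "1 \<le> a" "a \<le> n" "1 \<le> b" "b \<le> n"
  shows "integrable lborel (\<lambda>t. Re (race_charfun \<alpha> n a b t))"
proof (rule Bochner_Integration.integrable_bound)
  have rate: "0 < clock_rate \<alpha> n"
    using assms clock_rate_pos by auto
  show "integrable lborel (\<lambda>t. clock_rate \<alpha> n * (clock_rate \<alpha> n / ((clock_rate \<alpha> n)\<^sup>2 + t\<^sup>2)))"
    using has_bochner_integral_mult_right[OF has_bochner_integral_Cauchy_kernel[OF rate], of "clock_rate \<alpha> n"]
    by (simp add: has_bochner_integral_iff)
  show "(\<lambda>t. Re (race_charfun \<alpha> n a b t)) \<in> borel_measurable lborel"
    unfolding race_charfun_def by measurable
  show "AE t in lborel. norm (Re (race_charfun \<alpha> n a b t))
      \<le> norm (clock_rate \<alpha> n * (clock_rate \<alpha> n / ((clock_rate \<alpha> n)\<^sup>2 + t\<^sup>2)))"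
  proof (rule AE_I2)
    fix t
    show "norm (Re (race_charfun \<alpha> n a b t))
        \<le> norm (clock_rate \<alpha> n * (clock_rate \<alpha> n / ((clock_rate \<alpha> n)\<^sup>2 + t\<^sup>2)))"
      using order_trans[OF abs_Re_le_cmod norm_race_charfun_le[OF assms]]
      by (simp add: power2_eq_square)
  qed
qed

lemma race_integral_target:
  assumes "1 \<le> n"
  shows "race_integral \<alpha> n n n = pi * clock_rate \<alpha> n"
proof -
  have rate: "0 < clock_rate \<alpha> n"
    using assms by (rule clock_rate_pos)
  then have "race_charfun \<alpha> n n n t = of_real ((clock_rate \<alpha> n)\<^sup>2 / ((clock_rate \<alpha> n)\<^sup>2 + t\<^sup>2))" for t
    unfolding race_charfun_def by (simp only: atLeastAtMost_singleton prod.insert_if prod.empty finite.emptyI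
        empty_iff if_False mult_1_right Cauchy_factor_times_conj)
  then have "Re (race_charfun \<alpha> n n n t) = clock_rate \<alpha> n * (clock_rate \<alpha> n / ((clock_rate \<alpha> n)\<^sup>2 + t\<^sup>2))" for t
    by (simp add: power2_eq_square)
  then show ?thesis
    using has_bochner_integral_mult_right[OF has_bochner_integral_Cauchy_kernel[OF rate], of "clock_rate \<alpha> n"]
    by (simp add: race_integral_def has_bochner_integral_iff mult.commute)
qed

text \<open>Past the target the race integral vanishes, as the hitting probability does: at least
  two distinct rates remain, so partial fractions apply.\<close>

lemma race_charfun_exit:
  assumes "0 < \<alpha>" "1 \<le> a" "1 \<le> b" "(a = n + 1 \<and> b < n) \<or> (b = n + 1 \<and> a < n)"
  shows "has_bochner_integral lborel (\<lambda>t. Re (race_charfun \<alpha> n a b t)) 0"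
proof -
  have Cauchy: "has_bochner_integral lborel
      (\<lambda>t. Re (\<Prod>k\<in>{c..n}. of_real (clock_rate \<alpha> k) / (of_real (clock_rate \<alpha> k) + \<i> * of_real t))) 0"
    if "1 \<le> c" "c < n" for c
    using that assms(1) clock_rate_pos
    by (intro has_bochner_integral_Re_prod_Cauchy_factors inj_on_subset[OF inj_on_clock_rate]) auto
  from assms(4) show ?thesis
  proof
    assume "a = n + 1 \<and> b < n"
    then show ?thesis
      using Cauchy[of b] assms by (simp add: race_charfun_def)
  next
    assume "b = n + 1 \<and> a < n"
    then show ?thesis
      using Cauchy[of a] assms by (simp add: race_charfun_def Re_prod_conj_Cauchy_factors)
  qed
qed

lemma bingo_prob_eq_race_integral_past_target:
  assumes "0 < \<alpha>" "1 \<le> a" "1 \<le> b" "(a = n + 1 \<and> b < n) \<or> (b = n + 1 \<and> a < n)"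
  shows "bingo_prob \<alpha> a b n n = race_integral \<alpha> n a b / (pi * clock_rate \<alpha> n)
    \<and> integrable lborel (\<lambda>t. Re (race_charfun \<alpha> n a b t))"
  using race_charfun_exit[OF assms] bingo_prob_eq_0_if_past_target[of n a n b \<alpha>] assms(4)
  by (auto simp: has_bochner_integral_iff race_integral_def)

lemma race_integral_step:
  assumes "1 \<le> a" "a \<le> n" "1 \<le> b" "b \<le> n"
    and "integrable lborel (\<lambda>t. Re (race_charfun \<alpha> n (a + 1) b t))"
    and "integrable lborel (\<lambda>t. Re (race_charfun \<alpha> n a (b + 1) t))"
  shows "race_integral \<alpha> n a b =
    step_prob \<alpha> a b * race_integral \<alpha> n (a + 1) b + (1 - step_prob \<alpha> a b) * race_integral \<alpha> n a (b + 1)"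
proof -
  have "Re (race_charfun \<alpha> n a b t) = step_prob \<alpha> a b * Re (race_charfun \<alpha> n (a + 1) b t)
      + (1 - step_prob \<alpha> a b) * Re (race_charfun \<alpha> n a (b + 1) t)" for t
    by (subst race_charfun_step[OF assms(1-4)]) simp
  then show ?thesis
    using assms(5,6) by (simp add: race_integral_def)
qed

lemma bingo_prob_eq_race_integral:
  assumes "0 < \<alpha>" "1 \<le> a" "a \<le> n" "1 \<le> b" "b \<le> n"
  shows "bingo_prob \<alpha> a b n n = race_integral \<alpha> n a b / (pi * clock_rate \<alpha> n)"
  using assms(2-)
proof (induction "(n - a) + (n - b)" arbitrary: a b rule: less_induct)
  case less
  have rate: "0 < clock_rate \<alpha> n"
    using less.prems clock_rate_pos by auto
  show ?case
  proof (cases "(a, b) = (n, n)")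
    case True
    then show ?thesis
      using less.prems rate by (simp add: bingo_prob_target race_integral_target)
  next
    case False
    have child: "bingo_prob \<alpha> a' b' n n = race_integral \<alpha> n a' b' / (pi * clock_rate \<alpha> n)
        \<and> integrable lborel (\<lambda>t. Re (race_charfun \<alpha> n a' b' t))"
      if "(a', b') \<in> {(a + 1, b), (a, b + 1)}" for a' b'
    proof (cases "a' \<le> n \<and> b' \<le> n")
      case True
      then have smaller: "(n - a') + (n - b') < (n - a) + (n - b)" "1 \<le> a'" "a' \<le> n" "1 \<le> b'" "b' \<le> n"
        using that less.prems by auto
      show ?thesis
        using less.hyps[OF smaller] race_charfun_integrable[OF smaller(2-)] by blast
    next
      case False
      then have "(a' = n + 1 \<and> b' < n) \<or> (b' = n + 1 \<and> a' < n)"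
        using that less.prems \<open>(a, b) \<noteq> (n, n)\<close> by auto
      then show ?thesis
        using that less.prems by (intro bingo_prob_eq_race_integral_past_target assms(1)) auto
    qed
    have "bingo_prob \<alpha> a b n n =
        step_prob \<alpha> a b * bingo_prob \<alpha> (a + 1) b n n + (1 - step_prob \<alpha> a b) * bingo_prob \<alpha> a (b + 1) n n"
      using False by (rule bingo_prob_first_step)
    also have "\<dots> = (step_prob \<alpha> a b * race_integral \<alpha> n (a + 1) b
        + (1 - step_prob \<alpha> a b) * race_integral \<alpha> n a (b + 1)) / (pi * clock_rate \<alpha> n)"
      using child[of "a + 1" b] child[of a "b + 1"] by (simp add: add_divide_distrib)
    also have "\<dots> = race_integral \<alpha> n a b / (pi * clock_rate \<alpha> n)"
      using child[of "a + 1" b] child[of a "b + 1"] less.prems by (simp add: race_integral_step)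
    finally show ?thesis .
  qed
qed

section \<open>The diagonal race integral\<close>

lemma race_charfun_diag:
  assumes "1 \<le> a"
  shows "race_charfun \<alpha> n a a t = of_real (\<Prod>k=a..n. (clock_rate \<alpha> k)\<^sup>2 / ((clock_rate \<alpha> k)\<^sup>2 + t\<^sup>2))"
proof -
  have "race_charfun \<alpha> n a a t = (\<Prod>k=a..n.
      of_real (clock_rate \<alpha> k) / (of_real (clock_rate \<alpha> k) - \<i> * of_real t) *
      (of_real (clock_rate \<alpha> k) / (of_real (clock_rate \<alpha> k) + \<i> * of_real t)))"
    unfolding race_charfun_def by (rule prod.distrib[symmetric])
  also have "\<dots> = (\<Prod>k=a..n. of_real ((clock_rate \<alpha> k)\<^sup>2 / ((clock_rate \<alpha> k)\<^sup>2 + t\<^sup>2)))"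
    using assms by (intro prod.cong refl Cauchy_factor_times_conj clock_rate_pos) auto
  finally show ?thesis
    by simp
qed

definition diag_term :: "real \<Rightarrow> nat \<Rightarrow> nat \<Rightarrow> real \<Rightarrow> real" where
  "diag_term \<alpha> a k u = u\<^sup>2 * real a powr (2 * \<alpha> - 1) * real k powr (- 2 * \<alpha>)"

definition diag_integrand :: "real \<Rightarrow> nat \<Rightarrow> nat \<Rightarrow> real \<Rightarrow> real" where
  "diag_integrand \<alpha> n a u = (\<Prod>k=a..n. 1 / (1 + diag_term \<alpha> a k u))"

lemma diag_term_nonneg: "0 \<le> diag_term \<alpha> a k u"
  by (simp add: diag_term_def)

lemma Cauchy_factor_diag_rescaled:
  assumes "1 \<le> k"
  shows "(clock_rate \<alpha> k)\<^sup>2 / ((clock_rate \<alpha> k)\<^sup>2 + (0 + real a powr ((2 * \<alpha> - 1) / 2) * u)\<^sup>2)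
    = 1 / (1 + diag_term \<alpha> a k u)"
proof -
  define P where "P = real k powr (2 * \<alpha>)"
  define Q where "Q = real a powr (2 * \<alpha> - 1)"
  have P: "0 < P"
    using assms by (simp add: P_def)
  have rate: "(clock_rate \<alpha> k)\<^sup>2 = P"
    using assms by (simp add: clock_rate_def P_def powr_power mult.commute)
  have scale: "(0 + real a powr ((2 * \<alpha> - 1) / 2) * u)\<^sup>2 = Q * u\<^sup>2"
  proof (cases "a = 0")
    case False
    then have "(real a powr ((2 * \<alpha> - 1) / 2))\<^sup>2 = real a powr (of_nat 2 * ((2 * \<alpha> - 1) / 2))"
      by (intro powr_power) simp
    also have "of_nat 2 * ((2 * \<alpha> - 1) / 2) = 2 * \<alpha> - 1"
      by simp
    finally show ?thesis
      by (simp add: Q_def power_mult_distrib)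
  qed (simp add: Q_def)
  have diag: "diag_term \<alpha> a k u = u\<^sup>2 * Q / P"
    by (simp add: diag_term_def Q_def P_def powr_minus divide_inverse)
  have "0 < P + Q * u\<^sup>2"
    using P by (simp add: Q_def add_pos_nonneg)
  then show ?thesis
    unfolding rate scale diag using P by (simp add: field_simps)
qed

lemma race_integral_diag:
  assumes "1 \<le> a"
  shows "race_integral \<alpha> n a a = real a powr ((2 * \<alpha> - 1) / 2) * (\<integral>u. diag_integrand \<alpha> n a u \<partial>lborel)"
proof -
  define s where "s = real a powr ((2 * \<alpha> - 1) / 2)"
  have s: "0 < s"
    using assms by (simp add: s_def)
  have "race_integral \<alpha> n a a = (\<integral>t. (\<Prod>k=a..n. (clock_rate \<alpha> k)\<^sup>2 / ((clock_rate \<alpha> k)\<^sup>2 + t\<^sup>2)) \<partial>lborel)"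
    unfolding race_integral_def race_charfun_diag[OF assms] Re_complex_of_real ..
  also have "\<dots> = \<bar>s\<bar> *\<^sub>R (\<integral>u. (\<Prod>k=a..n. (clock_rate \<alpha> k)\<^sup>2 / ((clock_rate \<alpha> k)\<^sup>2 + (0 + s * u)\<^sup>2)) \<partial>lborel)"
    using s by (intro lborel_integral_real_affine) simp
  also have "(\<lambda>u. \<Prod>k=a..n. (clock_rate \<alpha> k)\<^sup>2 / ((clock_rate \<alpha> k)\<^sup>2 + (0 + s * u)\<^sup>2)) = diag_integrand \<alpha> n a"
    unfolding diag_integrand_def s_def using assms by (intro ext prod.cong refl Cauchy_factor_diag_rescaled) auto
  finally show ?thesis
    using s by (simp add: s_def)
qed

lemma bingo_prob_diag:
  assumes "0 < \<alpha>" "1 \<le> a" "a \<le> n"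
  shows "bingo_prob \<alpha> a a n n
    = real a powr ((2 * \<alpha> - 1) / 2) * (\<integral>u. diag_integrand \<alpha> n a u \<partial>lborel) / (pi * real n powr \<alpha>)"
  using assms by (simp add: bingo_prob_eq_race_integral race_integral_diag clock_rate_def)

section \<open>Tail sums of a p-series\<close>

lemma powr_neg_diff_le:
  fixes \<beta> k :: real
  assumes "0 < \<beta>" "1 \<le> k"
  shows "k powr - \<beta> - (k + 1) powr - \<beta> \<le> \<beta> * k powr (- \<beta> - 1)"
proof -
  have "\<exists>z. k < z \<and> z < k + 1 \<and> (k + 1) powr - \<beta> - k powr - \<beta> = (k + 1 - k) * (- \<beta> * z powr (- \<beta> - 1))"
    using assms by (intro MVT2) (auto intro!: DERIV_cong[OF has_real_derivative_powr])
  then obtain z where z: "k < z" "(k + 1) powr - \<beta> - k powr - \<beta> = - \<beta> * z powr (- \<beta> - 1)"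
    by auto
  have "z powr (- \<beta> - 1) \<le> k powr (- \<beta> - 1)"
    using z assms by (intro powr_mono2') auto
  then have "\<beta> * z powr (- \<beta> - 1) \<le> \<beta> * k powr (- \<beta> - 1)"
    using assms(1) by (intro mult_left_mono) auto
  then show ?thesis
    using z(2) by linarith
qed

lemma powr_neg_diff_ge:
  fixes \<beta> k :: real
  assumes "0 < \<beta>" "1 < k"
  shows "\<beta> * k powr (- \<beta> - 1) \<le> (k - 1) powr - \<beta> - k powr - \<beta>"
proof -
  have "\<exists>z. k - 1 < z \<and> z < k \<and> k powr - \<beta> - (k - 1) powr - \<beta> = (k - (k - 1)) * (- \<beta> * z powr (- \<beta> - 1))"
    using assms by (intro MVT2) (auto intro!: DERIV_cong[OF has_real_derivative_powr])
  then obtain z where z: "k - 1 < z" "z < k" "k powr - \<beta> - (k - 1) powr - \<beta> = - \<beta> * z powr (- \<beta> - 1)"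
    by auto
  have "k powr (- \<beta> - 1) \<le> z powr (- \<beta> - 1)"
    using z assms by (intro powr_mono2') auto
  then have "\<beta> * k powr (- \<beta> - 1) \<le> \<beta> * z powr (- \<beta> - 1)"
    using assms(1) by (intro mult_left_mono) auto
  then show ?thesis
    using z(3) by linarith
qed

lemma sum_powr_lower_bound:
  assumes "0 < \<beta>" "1 \<le> a" "a \<le> n"
  shows "real a powr - \<beta> - real (n + 1) powr - \<beta> \<le> \<beta> * (\<Sum>k=a..n. real k powr (- \<beta> - 1))"
proof -
  have "real a powr - \<beta> - real (n + 1) powr - \<beta> = (\<Sum>k=a..n. real k powr - \<beta> - real (k + 1) powr - \<beta>)"
    using sum_Suc_diff[of a n "\<lambda>i. - (real i powr - \<beta>)"] assms by simp
  also have "\<dots> \<le> (\<Sum>k=a..n. \<beta> * real k powr (- \<beta> - 1))"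
  proof (rule sum_mono)
    fix k assume "k \<in> {a..n}"
    then show "real k powr - \<beta> - real (k + 1) powr - \<beta> \<le> \<beta> * real k powr (- \<beta> - 1)"
      using powr_neg_diff_le[OF assms(1), of "real k"] assms by (simp add: add.commute)
  qed
  finally show ?thesis
    by (simp add: sum_distrib_left)
qed

lemma sum_powr_upper_bound:
  assumes "0 < \<beta>" "2 \<le> a" "a \<le> n"
  shows "\<beta> * (\<Sum>k=a..n. real k powr (- \<beta> - 1)) \<le> real (a - 1) powr - \<beta> - real n powr - \<beta>"
proof -
  have "(\<Sum>k=a..n. \<beta> * real k powr (- \<beta> - 1)) \<le> (\<Sum>k=a..n. real (k - 1) powr - \<beta> - real k powr - \<beta>)"
  proof (rule sum_mono)
    fix k assume "k \<in> {a..n}"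
    then have "1 < real k" "real (k - 1) = real k - 1"
      using assms by auto
    then show "\<beta> * real k powr (- \<beta> - 1) \<le> real (k - 1) powr - \<beta> - real k powr - \<beta>"
      using powr_neg_diff_ge[OF assms(1), of "real k"] by simp
  qed
  also have "\<dots> = (\<Sum>k=Suc (a - 1)..Suc (n - 1). real (k - 1) powr - \<beta> - real k powr - \<beta>)"
    using assms by simp
  also have "\<dots> = (\<Sum>i=a - 1..n - 1. real i powr - \<beta> - real (Suc i) powr - \<beta>)"
    by (subst sum.shift_bounds_cl_Suc_ivl) simp
  also have "\<dots> = real (a - 1) powr - \<beta> - real n powr - \<beta>"
    using sum_Suc_diff[of "a - 1" "n - 1" "\<lambda>i. - (real i powr - \<beta>)"] assms by (simp add: of_nat_diff)
  finally show ?thesis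
    by (simp add: sum_distrib_left)
qed

definition tail_sum :: "real \<Rightarrow> nat \<Rightarrow> nat \<Rightarrow> real" where
  "tail_sum \<beta> a n = real a powr \<beta> * (\<Sum>k=a..n. real k powr (- \<beta> - 1))"

lemma tail_sum_bounds:
  assumes "0 < \<beta>" "2 \<le> a" "a \<le> n"
  shows "(1 - (real a / real (n + 1)) powr \<beta>) / \<beta> \<le> tail_sum \<beta> a n"
    and "tail_sum \<beta> a n \<le> (real a / real (a - 1)) powr \<beta> / \<beta>"
proof -
  have pos: "0 < real a powr \<beta>"
    using assms by simp
  have "1 - (real a / real (n + 1)) powr \<beta> = real a powr \<beta> * (real a powr - \<beta> - real (n + 1) powr - \<beta>)"
    using assms by (simp add: right_diff_distrib powr_minus powr_mult inverse_powr divide_inverse)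
  also have "\<dots> \<le> real a powr \<beta> * (\<beta> * (\<Sum>k=a..n. real k powr (- \<beta> - 1)))"
    using sum_powr_lower_bound[of \<beta> a n] assms pos by (intro mult_left_mono) auto
  finally show "(1 - (real a / real (n + 1)) powr \<beta>) / \<beta> \<le> tail_sum \<beta> a n"
    using assms(1) by (simp add: tail_sum_def divide_le_eq mult_ac)
  have "real a powr \<beta> * (\<beta> * (\<Sum>k=a..n. real k powr (- \<beta> - 1))) \<le> real a powr \<beta> * (real (a - 1) powr - \<beta> - real n powr - \<beta>)"
    using sum_powr_upper_bound[of \<beta> a n] assms pos by (intro mult_left_mono) auto
  also have "\<dots> \<le> real a powr \<beta> * real (a - 1) powr - \<beta>"
    using pos by (intro mult_left_mono) auto
  also have "\<dots> = (real a / real (a - 1)) powr \<beta>"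
    by (simp add: powr_minus powr_mult inverse_powr divide_inverse)
  finally show "tail_sum \<beta> a n \<le> (real a / real (a - 1)) powr \<beta> / \<beta>"
    using assms(1) by (simp add: tail_sum_def le_divide_eq mult_ac)
qed

lemma eventually_le_of_ratio_tendsto_0:
  assumes "(\<lambda>n. real (A n) / real n) \<longlonglongrightarrow> 0" "0 < c"
  shows "eventually (\<lambda>n. real (A n) \<le> c * real n) sequentially"
  using order_tendstoD(2)[OF assms] eventually_gt_at_top[of 0]
  by eventually_elim (simp add: divide_less_eq)

lemma tendsto_ratio_pred:
  assumes "filterlim A at_top sequentially"
  shows "(\<lambda>n. real (A n) / real (A n - 1)) \<longlonglongrightarrow> 1"
proof -
  have "filterlim (\<lambda>n. - 1 + real (A n)) at_top sequentially"
    by (rule filterlim_tendsto_add_at_top[OF tendsto_const filterlim_compose[OF filterlim_real_sequentially assms]])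
  then have "(\<lambda>n. 1 + inverse (- 1 + real (A n))) \<longlonglongrightarrow> 1 + 0"
    by (intro tendsto_intros tendsto_inverse_0_at_top)
  moreover have "eventually (\<lambda>n. 2 \<le> A n) sequentially"
    using assms by (simp add: filterlim_at_top)
  then have "eventually (\<lambda>n. 1 + inverse (- 1 + real (A n)) = real (A n) / real (A n - 1)) sequentially"
  proof eventually_elim
    case (elim n)
    then have "real (A n - 1) = - 1 + real (A n)" "- 1 + real (A n) \<noteq> 0"
      by auto
    then show ?case
      by (simp add: field_simps)
  qed
  ultimately show ?thesis
    using Lim_transform_eventually by force
qed

lemma tendsto_tail_sum:
  assumes "0 < \<beta>" "filterlim A at_top sequentially" "(\<lambda>n. real (A n) / real n) \<longlonglongrightarrow> 0"
  shows "(\<lambda>n. tail_sum \<beta> (A n) n) \<longlonglongrightarrow> 1 / \<beta>"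
proof (rule tendsto_sandwich)
  have "(\<lambda>n. real (A n) / real (n + 1)) \<longlonglongrightarrow> 0"
  proof (rule tendsto_sandwich[OF _ _ tendsto_const assms(3)])
    show "eventually (\<lambda>n. real (A n) / real (n + 1) \<le> real (A n) / real n) sequentially"
      using eventually_gt_at_top[of 0] by eventually_elim (auto intro!: divide_left_mono)
  qed simp
  then have "(\<lambda>n. (1 - (real (A n) / real (n + 1)) powr \<beta>) / \<beta>) \<longlonglongrightarrow> (1 - 0) / \<beta>"
    using assms(1) by (intro tendsto_intros tendsto_zero_powrI[OF _ tendsto_const]) auto
  then show "(\<lambda>n. (1 - (real (A n) / real (n + 1)) powr \<beta>) / \<beta>) \<longlonglongrightarrow> 1 / \<beta>"
    by simp
  show "(\<lambda>n. (real (A n) / real (A n - 1)) powr \<beta> / \<beta>) \<longlonglongrightarrow> 1 / \<beta>"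
    using tendsto_divide[OF tendsto_powr[OF tendsto_ratio_pred[OF assms(2)] tendsto_const] tendsto_const, of \<beta> \<beta>] assms(1)
    by simp
  have "eventually (\<lambda>n. 2 \<le> A n) sequentially"
    using assms(2) by (simp add: filterlim_at_top)
  moreover have "eventually (\<lambda>n. real (A n) \<le> 1 * real n) sequentially"
    by (rule eventually_le_of_ratio_tendsto_0[OF assms(3)]) simp
  ultimately have "eventually (\<lambda>n. 2 \<le> A n \<and> A n \<le> n) sequentially"
    by eventually_elim simp
  then have "eventually (\<lambda>n. (1 - (real (A n) / real (n + 1)) powr \<beta>) / \<beta> \<le> tail_sum \<beta> (A n) n
      \<and> tail_sum \<beta> (A n) n \<le> (real (A n) / real (A n - 1)) powr \<beta> / \<beta>) sequentially"
  proof eventually_elim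
    case (elim n)
    then show ?case
      using tail_sum_bounds[OF assms(1), of "A n" n] by blast
  qed
  then show "eventually (\<lambda>n. (1 - (real (A n) / real (n + 1)) powr \<beta>) / \<beta> \<le> tail_sum \<beta> (A n) n) sequentially"
      "eventually (\<lambda>n. tail_sum \<beta> (A n) n \<le> (real (A n) / real (A n - 1)) powr \<beta> / \<beta>) sequentially"
    by (simp_all add: eventually_conj_iff)
qed

section \<open>Limit of the diagonal integral\<close>

lemma sum_diag_term: "(\<Sum>k=a..n. diag_term \<alpha> a k u) = u\<^sup>2 * tail_sum (2 * \<alpha> - 1) a n"
proof -
  have "- 2 * \<alpha> = - (2 * \<alpha> - 1) - 1"
    by simp
  then show ?thesis
    by (simp add: diag_term_def tail_sum_def sum_distrib_left mult.assoc)
qed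

lemma diag_term_le:
  assumes "0 < \<alpha>" "1 \<le> a" "a \<le> k"
  shows "diag_term \<alpha> a k u \<le> u\<^sup>2 / real a"
proof -
  have "real a powr (2 * \<alpha> - 1) * real k powr (- 2 * \<alpha>) \<le> real a powr (2 * \<alpha> - 1) * real a powr (- 2 * \<alpha>)"
    using assms by (intro mult_left_mono powr_mono2') auto
  also have "\<dots> = 1 / real a"
    using assms by (simp add: powr_add[symmetric] powr_neg_one)
  finally have "u\<^sup>2 * (real a powr (2 * \<alpha> - 1) * real k powr (- 2 * \<alpha>)) \<le> u\<^sup>2 * (1 / real a)"
    by (rule mult_left_mono) simp
  then show ?thesis
    by (simp add: diag_term_def mult.assoc)
qed

lemma exp_le_diag_integrand: "exp (- (u\<^sup>2 * tail_sum (2 * \<alpha> - 1) a n)) \<le> diag_integrand \<alpha> n a u"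
proof -
  have "exp (- (u\<^sup>2 * tail_sum (2 * \<alpha> - 1) a n)) = (\<Prod>k=a..n. exp (- diag_term \<alpha> a k u))"
    by (simp add: sum_diag_term[symmetric] exp_sum[symmetric] sum_negf)
  also have "\<dots> \<le> diag_integrand \<alpha> n a u"
    unfolding diag_integrand_def
  proof (intro prod_mono conjI)
    fix k
    have "1 + diag_term \<alpha> a k u \<le> exp (diag_term \<alpha> a k u)"
      by simp
    moreover have "0 < 1 + diag_term \<alpha> a k u"
      using diag_term_nonneg[of \<alpha> a k u] by simp
    ultimately show "exp (- diag_term \<alpha> a k u) \<le> 1 / (1 + diag_term \<alpha> a k u)"
      by (simp add: exp_minus divide_simps)
  qed simp
  finally show ?thesis .
qed

lemma diag_integrand_le_exp:
  assumes "0 < \<alpha>" "1 \<le> a" "u\<^sup>2 / real a \<le> 1"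
  shows "diag_integrand \<alpha> n a u
    \<le> exp (- (u\<^sup>2 * tail_sum (2 * \<alpha> - 1) a n - u\<^sup>2 / real a * (u\<^sup>2 * tail_sum (2 * \<alpha> - 1) a n)))"
proof -
  let ?x = "diag_term \<alpha> a"
  have "diag_integrand \<alpha> n a u \<le> (\<Prod>k=a..n. exp (- (?x k u - (?x k u)\<^sup>2)))"
    unfolding diag_integrand_def
  proof (intro prod_mono conjI)
    fix k assume "k \<in> {a..n}"
    then have x: "0 \<le> ?x k u" "?x k u \<le> 1"
      using diag_term_nonneg order_trans[OF diag_term_le assms(3)] assms by auto
    then have "exp (?x k u - (?x k u)\<^sup>2) \<le> 1 + ?x k u"
      using ln_one_plus_pos_lower_bound[OF x] by (metis exp_le_cancel_iff exp_ln add_pos_nonneg zero_less_one)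
    then have "1 / (1 + ?x k u) \<le> 1 / exp (?x k u - (?x k u)\<^sup>2)"
      using x by (intro divide_left_mono) (auto intro!: add_pos_nonneg)
    then show "1 / (1 + ?x k u) \<le> exp (- (?x k u - (?x k u)\<^sup>2))"
      by (simp only: exp_minus inverse_eq_divide)
    show "0 \<le> 1 / (1 + ?x k u)"
      using x by simp
  qed
  also have "\<dots> = exp (- ((\<Sum>k=a..n. ?x k u) - (\<Sum>k=a..n. (?x k u)\<^sup>2)))"
    by (simp add: exp_sum[symmetric] sum_negf sum_subtractf)
  also have "\<dots> \<le> exp (- (u\<^sup>2 * tail_sum (2 * \<alpha> - 1) a n - u\<^sup>2 / real a * (u\<^sup>2 * tail_sum (2 * \<alpha> - 1) a n)))"
  proof -
    have "?x k u * ?x k u \<le> u\<^sup>2 / real a * ?x k u" if "k \<in> {a..n}" for k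
      using diag_term_le[OF assms(1,2), of k u] diag_term_nonneg[of \<alpha> a k u] that
      by (intro mult_right_mono) auto
    then have "(\<Sum>k=a..n. (?x k u)\<^sup>2) \<le> (\<Sum>k=a..n. u\<^sup>2 / real a * ?x k u)"
      by (intro sum_mono) (simp add: power2_eq_square)
    also have "\<dots> = u\<^sup>2 / real a * (u\<^sup>2 * tail_sum (2 * \<alpha> - 1) a n)"
      by (simp only: sum_distrib_left[symmetric] sum_diag_term)
    finally show ?thesis
      by (simp add: sum_diag_term)
  qed
  finally show ?thesis .
qed

lemma diag_integrand_le_Cauchy:
  assumes "0 < \<alpha>" "1 \<le> a" "2 * a \<le> n"
  shows "diag_integrand \<alpha> n a u \<le> 1 / (1 + u\<^sup>2 * 2 powr (- 2 * \<alpha>))"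
proof -
  define y where "y = u\<^sup>2 * real a powr (2 * \<alpha> - 1) * real (2 * a) powr (- 2 * \<alpha>)"
  have y: "0 \<le> y"
    by (simp add: y_def)
  have "real a powr 1 * real a powr (2 * \<alpha> - 1) * real a powr (- 2 * \<alpha>) = real a powr (1 + (2 * \<alpha> - 1) + - 2 * \<alpha>)"
    by (simp only: powr_add)
  then have "real a * real a powr (2 * \<alpha> - 1) * real a powr (- 2 * \<alpha>) = 1"
    using assms by simp
  then have ay: "real a * y = u\<^sup>2 * 2 powr (- 2 * \<alpha>)"
    by (simp add: y_def powr_mult mult_ac)
  have "1 + real a * y \<le> (1 + y) ^ a"
    using Bernoulli_inequality[of y a] y by simp
  also have "\<dots> = (\<Prod>k\<in>{a..<2 * a}. 1 + y)"
    by simp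
  also have "\<dots> \<le> (\<Prod>k\<in>{a..<2 * a}. 1 + diag_term \<alpha> a k u)"
  proof (intro prod_mono conjI)
    fix k assume "k \<in> {a..<2 * a}"
    then have "real (2 * a) powr (- 2 * \<alpha>) \<le> real k powr (- 2 * \<alpha>)"
      using assms by (intro powr_mono2') auto
    then show "1 + y \<le> 1 + diag_term \<alpha> a k u"
      unfolding y_def diag_term_def by (simp add: mult_left_mono)
  qed (use y in simp)
  also have "\<dots> \<le> (\<Prod>k=a..n. 1 + diag_term \<alpha> a k u)"
    using assms by (intro prod_mono2) (auto simp: diag_term_nonneg add_nonneg_nonneg)
  finally have "1 + u\<^sup>2 * 2 powr (- 2 * \<alpha>) \<le> (\<Prod>k=a..n. 1 + diag_term \<alpha> a k u)"
    using ay by simp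
  moreover have "diag_integrand \<alpha> n a u = 1 / (\<Prod>k=a..n. 1 + diag_term \<alpha> a k u)"
    unfolding diag_integrand_def by (simp add: prod_dividef)
  moreover have "0 < 1 + u\<^sup>2 * 2 powr (- 2 * \<alpha>)"
    by (simp add: add_pos_nonneg)
  ultimately show ?thesis
    by (simp add: frac_le)
qed

lemma tendsto_diag_integrand:
  assumes "1 / 2 < \<alpha>" "filterlim A at_top sequentially" "(\<lambda>n. real (A n) / real n) \<longlonglongrightarrow> 0"
    and "\<forall>n. 1 \<le> A n"
  shows "(\<lambda>n. diag_integrand \<alpha> n (A n) u) \<longlonglongrightarrow> exp (- (u\<^sup>2 / (2 * \<alpha> - 1)))"
proof -
  have tail: "(\<lambda>n. tail_sum (2 * \<alpha> - 1) (A n) n) \<longlonglongrightarrow> 1 / (2 * \<alpha> - 1)"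
    using assms by (intro tendsto_tail_sum) auto
  have small: "(\<lambda>n. u\<^sup>2 / real (A n)) \<longlonglongrightarrow> 0"
    using filterlim_compose[OF filterlim_real_sequentially assms(2)]
    by (intro tendsto_divide_0[OF tendsto_const]) (rule filterlim_at_top_imp_at_infinity)
  show ?thesis
  proof (rule tendsto_sandwich)
    show "eventually (\<lambda>n. exp (- (u\<^sup>2 * tail_sum (2 * \<alpha> - 1) (A n) n)) \<le> diag_integrand \<alpha> n (A n) u) sequentially"
      by (intro always_eventually allI exp_le_diag_integrand)
    show "eventually (\<lambda>n. diag_integrand \<alpha> n (A n) u \<le> exp (- (u\<^sup>2 * tail_sum (2 * \<alpha> - 1) (A n) n
        - u\<^sup>2 / real (A n) * (u\<^sup>2 * tail_sum (2 * \<alpha> - 1) (A n) n)))) sequentially"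
      using order_tendstoD(2)[OF small zero_less_one]
      by eventually_elim (rule diag_integrand_le_exp, use assms in auto)
    show "(\<lambda>n. exp (- (u\<^sup>2 * tail_sum (2 * \<alpha> - 1) (A n) n))) \<longlonglongrightarrow> exp (- (u\<^sup>2 / (2 * \<alpha> - 1)))"
      using tendsto_exp[OF tendsto_minus[OF tendsto_mult[OF tendsto_const tail]], of "u\<^sup>2"] by simp
    show "(\<lambda>n. exp (- (u\<^sup>2 * tail_sum (2 * \<alpha> - 1) (A n) n
        - u\<^sup>2 / real (A n) * (u\<^sup>2 * tail_sum (2 * \<alpha> - 1) (A n) n)))) \<longlonglongrightarrow> exp (- (u\<^sup>2 / (2 * \<alpha> - 1)))"
      using tendsto_exp[OF tendsto_minus[OF tendsto_diff[OF tendsto_mult[OF tendsto_const tail]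
          tendsto_mult[OF small tendsto_mult[OF tendsto_const tail]]]], of "u\<^sup>2" "u\<^sup>2"]
      by simp
  qed
qed

lemma has_bochner_integral_Gaussian_scaled:
  assumes "0 < \<beta>"
  shows "has_bochner_integral lborel (\<lambda>u. exp (- (u\<^sup>2 / \<beta>))) (sqrt (pi * \<beta>))"
proof -
  define c where "c = 1 / sqrt \<beta>"
  have c: "0 < c"
    using assms by (simp add: c_def)
  have "has_bochner_integral lborel (\<lambda>x::real. exp (- x\<^sup>2)) (sqrt pi)"
    using has_bochner_integral_even_function[OF gaussian_moment_0] by simp
  then have "has_bochner_integral lborel (\<lambda>x. exp (- (0 + c * x)\<^sup>2)) (sqrt pi /\<^sub>R \<bar>c\<bar>)"
    using lborel_has_bochner_integral_real_affine_iff[of c "\<lambda>x. exp (- x\<^sup>2)" "sqrt pi" 0] c by simp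
  moreover have "(\<lambda>x. exp (- (0 + c * x)\<^sup>2)) = (\<lambda>u. exp (- (u\<^sup>2 / \<beta>)))"
    using assms by (auto simp: fun_eq_iff c_def power_mult_distrib power_divide)
  moreover have "sqrt pi /\<^sub>R \<bar>c\<bar> = sqrt (pi * \<beta>)"
    using assms c by (simp add: c_def real_sqrt_mult)
  ultimately show ?thesis
    by simp
qed

lemma integrable_Cauchy_dominant:
  fixes c :: real
  assumes "0 < c"
  shows "integrable lborel (\<lambda>u. 1 / (1 + u\<^sup>2 * c))"
proof -
  define w where "w = sqrt (1 / c)"
  have w: "0 < w" "w\<^sup>2 = 1 / c"
    using assms by (simp_all add: w_def)
  have "(\<lambda>t. w * (w / (w\<^sup>2 + t\<^sup>2))) = (\<lambda>u. 1 / (1 + u\<^sup>2 * c))"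
  proof
    fix t :: real
    have "0 < w\<^sup>2 + t\<^sup>2" "0 < 1 + t\<^sup>2 * c"
      using w assms by (simp_all add: add_pos_nonneg)
    then show "w * (w / (w\<^sup>2 + t\<^sup>2)) = 1 / (1 + t\<^sup>2 * c)"
      using w assms by (simp add: field_simps power2_eq_square)
  qed
  then show ?thesis
    using has_bochner_integral_mult_right[OF has_bochner_integral_Cauchy_kernel[OF w(1)], of w]
    by (simp add: has_bochner_integral_iff)
qed

lemma tendsto_integral_diag_integrand:
  assumes "1 / 2 < \<alpha>" "filterlim A at_top sequentially" "(\<lambda>n. real (A n) / real n) \<longlonglongrightarrow> 0"
    and "\<forall>n. 1 \<le> A n"
  shows "(\<lambda>n. \<integral>u. diag_integrand \<alpha> n (A n) u \<partial>lborel) \<longlonglongrightarrow> sqrt (pi * (2 * \<alpha> - 1))"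
proof -
  have "eventually (\<lambda>n. real (A n) \<le> 1 / 2 * real n) sequentially"
    by (rule eventually_le_of_ratio_tendsto_0[OF assms(3)]) simp
  then have "eventually (\<lambda>n. 2 * A n \<le> n) sequentially"
  proof eventually_elim
    case (elim n)
    then have "real (2 * A n) \<le> real n"
      by simp
    then show ?case
      by (simp only: of_nat_le_iff)
  qed
  then obtain N where N: "\<And>n. N \<le> n \<Longrightarrow> 2 * A n \<le> n"
    by (auto simp: eventually_sequentially)
  define c :: real where "c = 2 powr (- 2 * \<alpha>)"
  have "(\<lambda>i. \<integral>u. diag_integrand \<alpha> (i + N) (A (i + N)) u \<partial>lborel) \<longlonglongrightarrow> (\<integral>u. exp (- (u\<^sup>2 / (2 * \<alpha> - 1))) \<partial>lborel)"
  proof (rule integral_dominated_convergence[where w = "\<lambda>u. 1 / (1 + u\<^sup>2 * c)"])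
    show "integrable lborel (\<lambda>u. 1 / (1 + u\<^sup>2 * c))"
      by (rule integrable_Cauchy_dominant) (simp add: c_def)
    show "AE u in lborel. (\<lambda>i. diag_integrand \<alpha> (i + N) (A (i + N)) u) \<longlonglongrightarrow> exp (- (u\<^sup>2 / (2 * \<alpha> - 1)))"
      using assms by (intro AE_I2 LIMSEQ_ignore_initial_segment tendsto_diag_integrand)
    show "AE u in lborel. norm (diag_integrand \<alpha> (i + N) (A (i + N)) u) \<le> 1 / (1 + u\<^sup>2 * c)" for i
    proof (rule AE_I2)
      fix u
      have "0 \<le> diag_integrand \<alpha> (i + N) (A (i + N)) u"
        unfolding diag_integrand_def by (intro prod_nonneg) (simp add: diag_term_nonneg add_nonneg_pos)
      moreover have "diag_integrand \<alpha> (i + N) (A (i + N)) u \<le> 1 / (1 + u\<^sup>2 * c)"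
        unfolding c_def using assms N[of "i + N"] by (intro diag_integrand_le_Cauchy) auto
      ultimately show "norm (diag_integrand \<alpha> (i + N) (A (i + N)) u) \<le> 1 / (1 + u\<^sup>2 * c)"
        by simp
    qed
  qed (simp_all add: diag_integrand_def diag_term_def)
  also have "(\<integral>u. exp (- (u\<^sup>2 / (2 * \<alpha> - 1))) \<partial>lborel) = sqrt (pi * (2 * \<alpha> - 1))"
    using has_bochner_integral_Gaussian_scaled[of "2 * \<alpha> - 1"] assms(1) by (simp add: has_bochner_integral_iff)
  finally show ?thesis
    by (rule LIMSEQ_offset)
qed

lemma bingo_prob_diag_normalised:
  assumes "1 / 2 < \<alpha>" "1 \<le> a" "a \<le> n"
  shows "bingo_prob \<alpha> a a n n / (sqrt ((2 * \<alpha> - 1) / pi) * real a powr ((2 * \<alpha> - 1) / 2) * real n powr - \<alpha>)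
    = (\<integral>u. diag_integrand \<alpha> n a u \<partial>lborel) / sqrt (pi * (2 * \<alpha> - 1))"
proof -
  define s where "s = sqrt ((2 * \<alpha> - 1) / pi)"
  define P where "P = real a powr ((2 * \<alpha> - 1) / 2)"
  define J where "J = (\<integral>u. diag_integrand \<alpha> n a u \<partial>lborel)"
  have pos: "0 < s" "0 < P" "0 < real n powr \<alpha>"
    using assms by (auto simp: s_def P_def)
  have "pi * s = sqrt (pi\<^sup>2 * ((2 * \<alpha> - 1) / pi))"
    unfolding s_def by (simp only: real_sqrt_mult real_sqrt_abs abs_of_pos[OF pi_gt_zero])
  also have "pi\<^sup>2 * ((2 * \<alpha> - 1) / pi) = pi * (2 * \<alpha> - 1)"
    by (simp add: power2_eq_square)
  finally have sqrt_pi: "pi * s = sqrt (pi * (2 * \<alpha> - 1))" .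
  have "bingo_prob \<alpha> a a n n = P * J / (pi * real n powr \<alpha>)"
    unfolding P_def J_def using assms by (intro bingo_prob_diag) auto
  moreover have "real n powr - \<alpha> = 1 / real n powr \<alpha>"
    by (simp add: powr_minus divide_inverse)
  ultimately have "bingo_prob \<alpha> a a n n / (s * P * real n powr - \<alpha>)
      = P * J / (pi * real n powr \<alpha>) / (s * P * (1 / real n powr \<alpha>))"
    by simp
  also have "\<dots> = J / (pi * s)"
    using pos by (simp add: field_simps)
  also note sqrt_pi
  finally show ?thesis
    unfolding s_def P_def J_def .
qed

theorem mainTheorem8:
  fixes \<alpha> :: real and A :: "nat \<Rightarrow> nat"
  assumes "\<alpha> > 1"
    and "\<forall>n. A n > 0"
    and "filterlim A at_top sequentially"
    and "(\<lambda>n. real (A n)) \<in> o(\<lambda>n. real n)"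
  shows "(\<lambda>n. bingo_prob \<alpha> (A n) (A n) n n) \<sim>[sequentially]
           (\<lambda>n. sqrt ((2 * \<alpha> - 1) / pi) * real (A n) powr ((2 * \<alpha> - 1) / 2)
                 * real n powr (- \<alpha>))"
proof (rule asymp_equivI')
  have A_pos: "\<forall>n. 1 \<le> A n"
    using assms(2) by (simp add: Suc_le_eq)
  have A_ratio: "(\<lambda>n. real (A n) / real n) \<longlonglongrightarrow> 0"
    using smalloD_tendsto[OF assms(4)] by simp
  have "(\<lambda>n. \<integral>u. diag_integrand \<alpha> n (A n) u \<partial>lborel) \<longlonglongrightarrow> sqrt (pi * (2 * \<alpha> - 1))"
    using assms(1) by (intro tendsto_integral_diag_integrand assms(3) A_ratio A_pos) simp
  then have "(\<lambda>n. (\<integral>u. diag_integrand \<alpha> n (A n) u \<partial>lborel) / sqrt (pi * (2 * \<alpha> - 1)))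
      \<longlonglongrightarrow> sqrt (pi * (2 * \<alpha> - 1)) / sqrt (pi * (2 * \<alpha> - 1))"
    using assms(1) by (intro tendsto_divide tendsto_const) auto
  then have "(\<lambda>n. (\<integral>u. diag_integrand \<alpha> n (A n) u \<partial>lborel) / sqrt (pi * (2 * \<alpha> - 1))) \<longlonglongrightarrow> 1"
    using assms(1) by simp
  moreover have "eventually (\<lambda>n. (\<integral>u. diag_integrand \<alpha> n (A n) u \<partial>lborel) / sqrt (pi * (2 * \<alpha> - 1))
      = bingo_prob \<alpha> (A n) (A n) n n / (sqrt ((2 * \<alpha> - 1) / pi)
        * real (A n) powr ((2 * \<alpha> - 1) / 2) * real n powr - \<alpha>)) sequentially"
    using eventually_le_of_ratio_tendsto_0[OF A_ratio zero_less_one]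
  proof eventually_elim
    case (elim n)
    then have "A n \<le> n"
      by simp
    then show ?case
      using bingo_prob_diag_normalised[of \<alpha> "A n" n] A_pos assms(1) by simp
  qed
  ultimately show "(\<lambda>n. bingo_prob \<alpha> (A n) (A n) n n / (sqrt ((2 * \<alpha> - 1) / pi)
      * real (A n) powr ((2 * \<alpha> - 1) / 2) * real n powr - \<alpha>)) \<longlonglongrightarrow> 1"
    by (rule Lim_transform_eventually)
qed

end
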